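(* Let $q(x\mid\theta)=\sum_{k=1}^K\omega_k(\theta)\,\mathcal{N}\big(x;\vartheta_k(\theta),\Omega_k(\theta)\big)$ be a Gaussian mixture density network on $\mathbb{R}^{d_\mathcal{X}}$, $\theta\in\Theta\subseteq\mathbb{R}^{d_\Theta}$, with mixture weights $\omega_k(\theta)\ge0$ summing to $1$, such that: (i) $\omega_k,\vartheta_k,\Omega_k$ are continuous in $\theta$; (ii) there exist $r>0$, $C\ge0$ with $\max_k\|\vartheta_k(\theta)\|\le C(1+\|\theta\|^r)$ for all $\theta$; (iii) there exist $0<\lambda_{\min}\le\lambda_{\max}<\infty$ such that every $\Omega_k(\theta)$ is symmetric with all eigenvalues in $[\lambda_{\min},\lambda_{\max}]$, for all $k$ and $\theta$. Then for every $0<\zeta\le2$ there exist constants $0<K_1,K_2<\infty$ and $k_1,k_2\ge0$ such that for all $x\in\mathbb{R}^{d_\mathcal{X}}$ and $\theta\in\Theta$, $$\|\nabla_x\log q(x\mid\theta)\|_2\le K_1(1+\|\theta\|^{k_1})(1+\|x\|_2^{2/\zeta}),\qquad \big|\mathrm{Tr}\,\nabla_x^2\log q(x\mid\theta)\big|\le K_2(1+\|\theta\|^{k_2})(1+\|x\|_2^{4/\zeta}).$$ *)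

theory Defs
  imports "HOL-Analysis.Analysis"
begin

definition is_eigenvalue :: "real^'n^'n \<Rightarrow> real \<Rightarrow> bool" where
  "is_eigenvalue A l \<longleftrightarrow> (\<exists>v. v \<noteq> 0 \<and> A *v v = l *s v)"

definition gaussian_pdf :: "real^'n \<Rightarrow> real^'n^'n \<Rightarrow> real^'n \<Rightarrow> real" where
  "gaussian_pdf mu S x =
     exp (- (1/2) * ((x - mu) \<bullet> (matrix_inv S *v (x - mu))))
     / sqrt ((2 * pi) ^ CARD('n) * det S)"

definition partial_deriv :: "(real^'n \<Rightarrow> real) \<Rightarrow> 'n \<Rightarrow> real^'n \<Rightarrow> real" where
  "partial_deriv f i x = deriv (\<lambda>t. f (x + t *\<^sub>R axis i 1)) 0"

definition grad :: "(real^'n \<Rightarrow> real) \<Rightarrow> real^'n \<Rightarrow> real^'n" where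
  "grad f x = (\<chi> i. partial_deriv f i x)"

definition laplacian :: "(real^'n \<Rightarrow> real) \<Rightarrow> real^'n \<Rightarrow> real" where
  "laplacian f x = (\<Sum>i\<in>UNIV. partial_deriv (\<lambda>y. partial_deriv f i y) i x)"

definition gmm_density ::
  "nat \<Rightarrow> (nat \<Rightarrow> real^'t \<Rightarrow> real) \<Rightarrow> (nat \<Rightarrow> real^'t \<Rightarrow> real^'n)
    \<Rightarrow> (nat \<Rightarrow> real^'t \<Rightarrow> real^'n^'n) \<Rightarrow> real^'t \<Rightarrow> real^'n \<Rightarrow> real" where
  "gmm_density K w m S \<theta> x = (\<Sum>k=1..K. w k \<theta> * gaussian_pdf (m k \<theta>) (S k \<theta>) x)"

end

theory Submission
  imports Defs
begin

(* If every eigenvalue of the symmetric matrix Omega is at least lmin > 0, then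
   v . Omega v >= lmin |v|^2 (the minimum of the quadratic form on the unit sphere is an
   eigenvalue), so Omega is invertible with positive determinant and
   |Omega^-1 u| <= |u| / lmin.  Along a coordinate line every Gaussian exponent is a quadratic
   polynomial in t, so the partial derivatives of log q are explicit: d_i log q is the
   posterior average of the component scores (Omega_k^-1 (mu_k - x))_i, and d_i^2 log q is the
   posterior average of their squares minus (Omega_k^-1)_ii, minus (d_i log q)^2.  Hence
   |grad log q| <= G and |Laplacian log q| <= d (2 G^2 + 1/lmin) with
   G = (C (1 + |theta|^r) + |x|) / lmin, and since 2/zeta >= 1 we have
   |x| <= 1 + |x|^(2/zeta), which gives the claim with k1 = r and k2 = 2 r. *)

section \<open>Positive definite matrices\<close>

lemma linear_coeff_eq_0_if_quadratic_nonneg: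
  fixes a b :: real
  assumes "a \<ge> 0" and "\<And>t. 0 \<le> 2 * t * b + t\<^sup>2 * a"
  shows "b = 0"
proof (rule ccontr)
  assume "b \<noteq> 0"
  define t where "t = - b / (a + 1)"
  have t: "t * (a + 1) = - b"
    using \<open>a \<ge> 0\<close> by (simp add: t_def)
  have "(a + 1)\<^sup>2 * (2 * t * b + t\<^sup>2 * a) = 2 * (t * (a + 1)) * b * (a + 1) + (t * (a + 1))\<^sup>2 * a"
    by (simp add: power2_eq_square algebra_simps)
  also have "\<dots> = - b\<^sup>2 * (a + 2)"
    unfolding t by (simp add: power2_eq_square algebra_simps)
  also have "\<dots> < 0"
    using \<open>b \<noteq> 0\<close> \<open>a \<ge> 0\<close> by (simp add: mult_neg_pos)
  finally show False
    using assms(2)[of t] by (simp add: mult_less_0_iff)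
qed

lemma inner_symmetric_matrix:
  fixes S :: "real^'n^'n"
  assumes "transpose S = S"
  shows "u \<bullet> (S *v v) = (S *v u) \<bullet> v"
  by (metis assms dot_lmul_matrix transpose_matrix_vector)

lemma quadratic_form_minimizer_is_eigenvector:
  fixes S :: "real^'n^'n"
  assumes symm: "transpose S = S"
    and ge: "\<And>v. \<mu> * (v \<bullet> v) \<le> v \<bullet> (S *v v)"
    and eq: "v0 \<bullet> (S *v v0) = \<mu> * (v0 \<bullet> v0)"
  shows "S *v v0 = \<mu> *s v0"
proof -
  define w where "w = S *v v0 - \<mu> *\<^sub>R v0"
  have "w \<bullet> w = 0"
  proof (rule linear_coeff_eq_0_if_quadratic_nonneg)
    show "0 \<le> w \<bullet> (S *v w) - \<mu> * (w \<bullet> w)"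
      using ge[of w] by simp
    fix t :: real
    have "0 \<le> (v0 + t *\<^sub>R w) \<bullet> (S *v (v0 + t *\<^sub>R w)) - \<mu> * ((v0 + t *\<^sub>R w) \<bullet> (v0 + t *\<^sub>R w))"
      using ge by simp
    also have "\<dots> = 2 * t * (w \<bullet> w) + t\<^sup>2 * (w \<bullet> (S *v w) - \<mu> * (w \<bullet> w))"
      using eq inner_symmetric_matrix[OF symm, of v0 w]
      by (simp add: w_def inner_commute power2_eq_square algebra_simps)
    finally show "0 \<le> 2 * t * (w \<bullet> w) + t\<^sup>2 * (w \<bullet> (S *v w) - \<mu> * (w \<bullet> w))" .
  qed
  then show ?thesis
    by (simp add: w_def scalar_mult_eq_scaleR)
qed

lemma quadratic_form_ge_if_eigenvalues_ge:
  fixes S :: "real^'n^'n"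
  assumes symm: "transpose S = S" and eig: "\<And>l. is_eigenvalue S l \<Longrightarrow> lmin \<le> l"
  shows "lmin * (v \<bullet> v) \<le> v \<bullet> (S *v v)"
proof -
  let ?f = "\<lambda>v. v \<bullet> (S *v v)"
  have "continuous_on (sphere 0 1) ?f"
    by (intro continuous_intros linear_continuous_on matrix_vector_mul_linear)
  moreover have "(axis undefined 1 :: real^'n) \<in> sphere 0 1"
    by simp
  ultimately obtain v0 where v0: "v0 \<in> sphere 0 1" and min: "\<And>v. v \<in> sphere 0 1 \<Longrightarrow> ?f v0 \<le> ?f v"
    using continuous_attains_inf[OF compact_sphere] by blast
  define \<mu> where "\<mu> = ?f v0"
  have ge: "\<mu> * (v \<bullet> v) \<le> ?f v" for v
  proof (cases "v = 0")
    case False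
    have "\<mu> \<le> ?f ((1 / norm v) *\<^sub>R v)"
      unfolding \<mu>_def using False by (intro min) simp
    also have "\<dots> = ?f v / (v \<bullet> v)"
      by (simp add: matrix_vector_mult_scaleR power2_norm_eq_inner[symmetric] power2_eq_square)
    finally show ?thesis
      using False by (simp add: pos_le_divide_eq)
  qed simp
  have "v0 \<bullet> v0 = 1"
    using v0 by (simp add: power2_norm_eq_inner[symmetric])
  then have "S *v v0 = \<mu> *s v0"
    by (intro quadratic_form_minimizer_is_eigenvector[OF symm ge]) (simp add: \<mu>_def)
  then have "is_eigenvalue S \<mu>"
    using v0 unfolding is_eigenvalue_def by (intro exI[of _ v0]) auto
  then show ?thesis
    using eig ge[of v] by (meson inner_ge_zero mult_right_mono order_trans)
qed

lemma pos_def_imp_invertible: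
  fixes S :: "real^'n^'n"
  assumes "c > 0" and "\<And>v. c * (v \<bullet> v) \<le> v \<bullet> (S *v v)"
  shows "invertible S"
proof -
  have "x = 0" if "S *v x = 0" for x
  proof -
    have "c * (x \<bullet> x) \<le> 0"
      using assms(2)[of x] that by simp
    then show ?thesis
      using \<open>c > 0\<close> by (metis inner_gt_zero_iff mult_pos_pos not_le)
  qed
  then show ?thesis
    using matrix_left_invertible_ker invertible_left_inverse by blast
qed

lemma pos_def_imp_det_pos:
  fixes S :: "real^'n^'n"
  assumes "c > 0" and pd: "\<And>v. c * (v \<bullet> v) \<le> v \<bullet> (S *v v)"
  shows "det S > 0"
proof -
  \<comment> \<open>The segment from the identity to S stays positive definite, so det does not vanish on it.\<close>
  define M where "M t = (1 - t) *\<^sub>R mat 1 + t *\<^sub>R S" for t :: real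
  have "continuous_on {0..1} (\<lambda>t. det (M t))"
    unfolding M_def det_def by (intro continuous_intros)
  moreover have "det (M t) \<noteq> 0" if "t \<in> {0..1}" for t
  proof -
    have "(1 - t) + t * c > 0"
      using that \<open>c > 0\<close> by (cases "t = 0") (auto intro: add_nonneg_pos)
    moreover have "((1 - t) + t * c) * (v \<bullet> v) \<le> v \<bullet> (M t *v v)" for v
      using mult_left_mono[OF pd[of v], of t] that
      by (simp add: M_def scaleR_matrix_vector_assoc[symmetric] algebra_simps)
    ultimately show ?thesis
      using pos_def_imp_invertible invertible_det_nz by blast
  qed
  moreover have "M 0 = mat 1" "M 1 = S"
    by (simp_all add: M_def)
  ultimately show ?thesis
    using IVT2'[of "\<lambda>t. det (M t)" 1 0 0] by force
qed

lemma matrix_inv_right: "invertible A \<Longrightarrow> A ** matrix_inv A = mat 1"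
  unfolding invertible_def matrix_inv_def by (metis (mono_tags, lifting) someI_ex)

lemma transpose_matrix_inv_symmetric:
  fixes S :: "'a::comm_semiring_1^'n^'n"
  assumes "invertible S" and "transpose S = S"
  shows "transpose (matrix_inv S) = matrix_inv S"
proof -
  have "transpose (matrix_inv S) ** S = mat 1"
    using matrix_inv_right[OF assms(1)] matrix_transpose_mul[of S "matrix_inv S"] assms(2)
    by simp
  then have "(transpose (matrix_inv S) ** S) ** matrix_inv S = matrix_inv S"
    by simp
  then show ?thesis
    by (simp add: matrix_mul_assoc[symmetric] matrix_inv_right[OF assms(1)])
qed

lemma norm_matrix_inv_le:
  fixes S :: "real^'n^'n"
  assumes "c > 0" and pd: "\<And>v. c * (v \<bullet> v) \<le> v \<bullet> (S *v v)"
  shows "norm (matrix_inv S *v u) \<le> norm u / c"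
proof -
  define v where "v = matrix_inv S *v u"
  have "S *v v = u"
    using matrix_inv_right[OF pos_def_imp_invertible[OF assms]]
    by (simp add: v_def matrix_vector_mul_assoc)
  then have "c * (norm v)\<^sup>2 \<le> v \<bullet> u"
    using pd[of v] by (simp add: power2_norm_eq_inner)
  also have "\<dots> \<le> norm v * norm u"
    by (rule norm_cauchy_schwarz)
  finally have "c * norm v \<le> norm u"
    by (cases "norm v = 0") (auto simp: power2_eq_square)
  then show ?thesis
    using \<open>c > 0\<close> by (simp add: v_def pos_le_divide_eq mult.commute)
qed

lemma abs_matrix_inv_diag_le:
  fixes S :: "real^'n^'n"
  assumes "c > 0" and "\<And>v. c * (v \<bullet> v) \<le> v \<bullet> (S *v v)"
  shows "\<bar>matrix_inv S $ i $ i\<bar> \<le> 1 / c"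
proof -
  have "\<bar>matrix_inv S $ i $ i\<bar> \<le> norm (matrix_inv S *v axis i 1)"
    using component_le_norm_cart[of "matrix_inv S *v axis i 1" i]
    by (simp add: matrix_vector_mult_basis column_def)
  also have "\<dots> \<le> 1 / c"
    using norm_matrix_inv_le[OF assms, of "axis i 1"] by simp
  finally show ?thesis .
qed

section \<open>Derivatives of sums of Gaussian exponentials\<close>

lemma DERIV_sum_exp_quadratic:
  fixes c a b h :: "'k \<Rightarrow> real"
  shows "((\<lambda>t. \<Sum>k\<in>I. c k * exp (a k + t * b k - t\<^sup>2 / 2 * h k)) has_real_derivative
     (\<Sum>k\<in>I. c k * (exp (a k + t * b k - t\<^sup>2 / 2 * h k) * (b k - t * h k)))) (at t)"
  by (intro DERIV_sum DERIV_cmult) (auto intro!: derivative_eq_intros simp: algebra_simps)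

lemma DERIV_sum_exp_quadratic_slope:
  fixes c a b h :: "'k \<Rightarrow> real"
  shows "((\<lambda>t. \<Sum>k\<in>I. c k * (exp (a k + t * b k - t\<^sup>2 / 2 * h k) * (b k - t * h k))) has_real_derivative
     (\<Sum>k\<in>I. c k * (exp (a k + t * b k - t\<^sup>2 / 2 * h k) * ((b k - t * h k)\<^sup>2 - h k)))) (at t)"
  by (intro DERIV_sum DERIV_cmult) (auto intro!: derivative_eq_intros simp: algebra_simps power2_eq_square)

lemma deriv_ln_sum_exp_quadratic:
  fixes c a b h :: "'k \<Rightarrow> real"
  assumes "(\<Sum>k\<in>I. c k * exp (a k)) > 0"
  shows "deriv (\<lambda>t. ln (\<Sum>k\<in>I. c k * exp (a k + t * b k - t\<^sup>2 / 2 * h k))) 0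
     = (\<Sum>k\<in>I. c k * (exp (a k) * b k)) / (\<Sum>k\<in>I. c k * exp (a k))"
  by (rule DERIV_imp_deriv)
    (use DERIV_chain2[OF DERIV_ln_divide DERIV_sum_exp_quadratic[where t = 0 and I = I and c = c
        and a = a and b = b and h = h]] assms in simp)

lemma deriv_sum_exp_quadratic_quotient:
  fixes c a b h :: "'k \<Rightarrow> real"
  assumes "(\<Sum>k\<in>I. c k * exp (a k)) > 0"
  shows "deriv (\<lambda>t. (\<Sum>k\<in>I. c k * (exp (a k + t * b k - t\<^sup>2 / 2 * h k) * (b k - t * h k)))
                     / (\<Sum>k\<in>I. c k * exp (a k + t * b k - t\<^sup>2 / 2 * h k))) 0
     = (\<Sum>k\<in>I. c k * (exp (a k) * ((b k)\<^sup>2 - h k))) / (\<Sum>k\<in>I. c k * exp (a k))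
       - ((\<Sum>k\<in>I. c k * (exp (a k) * b k)) / (\<Sum>k\<in>I. c k * exp (a k)))\<^sup>2"
    (is "deriv ?f 0 = ?N' / ?Q - (?N / ?Q)\<^sup>2")
proof -
  have "deriv ?f 0 = (?N' * ?Q - ?N * ?N) / (?Q * ?Q)"
    by (rule DERIV_imp_deriv)
      (use DERIV_divide[OF
          DERIV_sum_exp_quadratic_slope[where t = 0 and I = I and c = c and a = a and b = b and h = h]
          DERIV_sum_exp_quadratic[where t = 0 and I = I and c = c and a = a and b = b and h = h]]
        assms in simp)
  also have "\<dots> = ?N' / ?Q - (?N / ?Q)\<^sup>2"
    using assms by (simp add: field_simps power2_eq_square)
  finally show ?thesis .
qed

section \<open>Gaussian mixtures\<close>

lemma norm_weighted_average_le:
  fixes f :: "'k \<Rightarrow> 'a::real_normed_vector"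
  assumes "\<And>k. k \<in> I \<Longrightarrow> 0 \<le> p k" and "\<And>k. k \<in> I \<Longrightarrow> norm (f k) \<le> B"
    and "(\<Sum>k\<in>I. p k) > 0"
  shows "norm ((1 / (\<Sum>k\<in>I. p k)) *\<^sub>R (\<Sum>k\<in>I. p k *\<^sub>R f k)) \<le> B"
proof -
  have "norm (\<Sum>k\<in>I. p k *\<^sub>R f k) \<le> (\<Sum>k\<in>I. p k * B)"
    using assms(1,2) by (intro sum_norm_le) (simp add: mult_left_mono)
  then show ?thesis
    using assms(3) by (simp add: sum_distrib_left[symmetric] divide_le_eq mult.commute)
qed

lemma abs_weighted_average_le:
  fixes f :: "'k \<Rightarrow> real"
  assumes "\<And>k. k \<in> I \<Longrightarrow> 0 \<le> p k" and "\<And>k. k \<in> I \<Longrightarrow> \<bar>f k\<bar> \<le> B"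
    and "(\<Sum>k\<in>I. p k) > 0"
  shows "\<bar>(\<Sum>k\<in>I. p k * f k) / (\<Sum>k\<in>I. p k)\<bar> \<le> B"
  using norm_weighted_average_le[of I p f B] assms by simp

(* A k is a precision matrix (an inverse covariance); the normalising constants of the
   component densities are absorbed into the weights c k. *)
locale gaussian_mixture =
  fixes I :: "'k set" and c :: "'k \<Rightarrow> real" and mu :: "'k \<Rightarrow> real^'n" and A :: "'k \<Rightarrow> real^'n^'n"
  assumes finite_I: "finite I"
    and c_nonneg: "\<And>k. k \<in> I \<Longrightarrow> 0 \<le> c k"
    and c_pos: "\<exists>k\<in>I. 0 < c k"
    and A_symmetric: "\<And>k. k \<in> I \<Longrightarrow> transpose (A k) = A k"
begin

definition exponent :: "'k \<Rightarrow> real^'n \<Rightarrow> real" where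
  "exponent k y = - (1 / 2) * ((y - mu k) \<bullet> (A k *v (y - mu k)))"

definition weight :: "'k \<Rightarrow> real^'n \<Rightarrow> real" where
  "weight k y = c k * exp (exponent k y)"

definition mixture :: "real^'n \<Rightarrow> real" where
  "mixture y = (\<Sum>k\<in>I. weight k y)"

definition score :: "'k \<Rightarrow> real^'n \<Rightarrow> real^'n" where
  "score k y = A k *v (mu k - y)"

lemma weight_nonneg: "k \<in> I \<Longrightarrow> 0 \<le> weight k y"
  by (simp add: weight_def c_nonneg)

lemma mixture_pos: "0 < mixture y"
proof -
  obtain k0 where "k0 \<in> I" "0 < c k0"
    using c_pos by blast
  then show ?thesis
    unfolding mixture_def using finite_I weight_nonneg
    by (intro sum_pos2[of I k0]) (auto simp: weight_def)
qed

lemma exponent_along_line: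
  assumes "k \<in> I"
  shows "exponent k (y + t *\<^sub>R e) = exponent k y + t * (e \<bullet> score k y) - t\<^sup>2 / 2 * (e \<bullet> (A k *v e))"
proof -
  have "y \<bullet> (A k *v e) = e \<bullet> (A k *v y)" "mu k \<bullet> (A k *v e) = e \<bullet> (A k *v mu k)"
    using inner_symmetric_matrix[OF A_symmetric[OF assms], of _ e] by (simp_all add: inner_commute)
  then show ?thesis
    unfolding exponent_def score_def
    by (simp add: power2_eq_square algebra_simps)
qed

lemma score_along_line:
  "e \<bullet> score k (y + t *\<^sub>R e) = e \<bullet> score k y - t * (e \<bullet> (A k *v e))"
  by (simp add: score_def algebra_simps)

lemma mixture_along_axis:
  "mixture (y + t *\<^sub>R axis i 1)
     = (\<Sum>k\<in>I. c k * exp (exponent k y + t * score k y $ i - t\<^sup>2 / 2 * A k $ i $ i))"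
  unfolding mixture_def weight_def
  by (intro sum.cong refl) (simp add: exponent_along_line inner_axis' matrix_vector_mult_basis column_def)

lemma partial_deriv_ln_mixture:
  "partial_deriv (\<lambda>y. ln (mixture y)) i y = (\<Sum>k\<in>I. weight k y * score k y $ i) / mixture y"
proof -
  have "partial_deriv (\<lambda>y. ln (mixture y)) i y
      = deriv (\<lambda>t. ln (\<Sum>k\<in>I. c k * exp (exponent k y + t * score k y $ i - t\<^sup>2 / 2 * A k $ i $ i))) 0"
    by (simp only: partial_deriv_def mixture_along_axis)
  also have "\<dots> = (\<Sum>k\<in>I. c k * (exp (exponent k y) * score k y $ i)) / (\<Sum>k\<in>I. c k * exp (exponent k y))"
    using mixture_pos[of y] by (intro deriv_ln_sum_exp_quadratic) (simp add: mixture_def weight_def)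
  finally show ?thesis
    by (simp add: mixture_def weight_def mult.assoc)
qed

lemma second_partial_deriv_ln_mixture:
  "partial_deriv (\<lambda>y. partial_deriv (\<lambda>y. ln (mixture y)) i y) i y
     = (\<Sum>k\<in>I. weight k y * ((score k y $ i)\<^sup>2 - A k $ i $ i)) / mixture y
       - (partial_deriv (\<lambda>y. ln (mixture y)) i y)\<^sup>2"
proof -
  have numerator: "(\<Sum>k\<in>I. weight k (y + t *\<^sub>R axis i 1) * score k (y + t *\<^sub>R axis i 1) $ i)
      = (\<Sum>k\<in>I. c k * (exp (exponent k y + t * score k y $ i - t\<^sup>2 / 2 * A k $ i $ i)
                          * (score k y $ i - t * A k $ i $ i)))" for t
    using score_along_line[of "axis i 1"]
    by (intro sum.cong refl)
      (simp add: weight_def exponent_along_line inner_axis' matrix_vector_mult_basis column_def mult.assoc)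
  have "partial_deriv (\<lambda>y. partial_deriv (\<lambda>y. ln (mixture y)) i y) i y
      = deriv (\<lambda>t. partial_deriv (\<lambda>y. ln (mixture y)) i (y + t *\<^sub>R axis i 1)) 0"
    by (simp only: partial_deriv_def[of "\<lambda>y. partial_deriv (\<lambda>y. ln (mixture y)) i y"])
  also have "\<dots> = deriv (\<lambda>t.
        (\<Sum>k\<in>I. c k * (exp (exponent k y + t * score k y $ i - t\<^sup>2 / 2 * A k $ i $ i)
                        * (score k y $ i - t * A k $ i $ i)))
        / (\<Sum>k\<in>I. c k * exp (exponent k y + t * score k y $ i - t\<^sup>2 / 2 * A k $ i $ i))) 0"
    by (simp only: partial_deriv_ln_mixture numerator mixture_along_axis)
  also have "\<dots> = (\<Sum>k\<in>I. c k * (exp (exponent k y) * ((score k y $ i)\<^sup>2 - A k $ i $ i)))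
                    / (\<Sum>k\<in>I. c k * exp (exponent k y))
                  - ((\<Sum>k\<in>I. c k * (exp (exponent k y) * score k y $ i)) / (\<Sum>k\<in>I. c k * exp (exponent k y)))\<^sup>2"
    using mixture_pos[of y] by (intro deriv_sum_exp_quadratic_quotient) (simp add: mixture_def weight_def)
  also have "\<dots> = (\<Sum>k\<in>I. weight k y * ((score k y $ i)\<^sup>2 - A k $ i $ i)) / mixture y
       - (partial_deriv (\<lambda>y. ln (mixture y)) i y)\<^sup>2"
    unfolding partial_deriv_ln_mixture by (simp add: mixture_def weight_def mult.assoc)
  finally show ?thesis .
qed

lemma grad_ln_mixture:
  "grad (\<lambda>y. ln (mixture y)) y = (1 / mixture y) *\<^sub>R (\<Sum>k\<in>I. weight k y *\<^sub>R score k y)"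
  by (simp add: grad_def vec_eq_iff partial_deriv_ln_mixture)

lemma norm_grad_ln_mixture_le:
  assumes "\<And>k. k \<in> I \<Longrightarrow> norm (score k y) \<le> G"
  shows "norm (grad (\<lambda>y. ln (mixture y)) y) \<le> G"
  unfolding grad_ln_mixture unfolding mixture_def
  using weight_nonneg assms mixture_pos[of y] by (intro norm_weighted_average_le) (auto simp: mixture_def)

lemma abs_laplacian_ln_mixture_le:
  fixes G h :: real
  assumes score: "\<And>k. k \<in> I \<Longrightarrow> norm (score k y) \<le> G"
    and diag: "\<And>k i. k \<in> I \<Longrightarrow> \<bar>A k $ i $ i\<bar> \<le> h"
  shows "\<bar>laplacian (\<lambda>y. ln (mixture y)) y\<bar> \<le> real CARD('n) * (2 * G\<^sup>2 + h)"
proof -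
  have abs_score: "\<bar>score k y $ i\<bar> \<le> G" if "k \<in> I" for k i
    using component_le_norm_cart score[OF that] by (rule order_trans)
  have first: "(partial_deriv (\<lambda>y. ln (mixture y)) i y)\<^sup>2 \<le> G\<^sup>2" for i
  proof -
    have "\<bar>partial_deriv (\<lambda>y. ln (mixture y)) i y\<bar> \<le> G"
      unfolding partial_deriv_ln_mixture unfolding mixture_def
      using weight_nonneg mixture_pos[of y] abs_score
      by (intro abs_weighted_average_le) (auto simp: mixture_def)
    from power_mono[OF this abs_ge_zero, where n = 2] show ?thesis
      by simp
  qed
  have "\<bar>(score k y $ i)\<^sup>2 - A k $ i $ i\<bar> \<le> G\<^sup>2 + h" if "k \<in> I" for k i
  proof -
    have "(score k y $ i)\<^sup>2 \<le> G\<^sup>2"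
      using power_mono[OF abs_score[OF that] abs_ge_zero, where n = 2] by simp
    then show ?thesis
      using diag[OF that, of i] zero_le_power2[of "score k y $ i"] zero_le_power2[of G]
      unfolding abs_le_iff by linarith
  qed
  then have second: "\<bar>(\<Sum>k\<in>I. weight k y * ((score k y $ i)\<^sup>2 - A k $ i $ i)) / mixture y\<bar> \<le> G\<^sup>2 + h" for i
    unfolding mixture_def using weight_nonneg mixture_pos[of y]
    by (intro abs_weighted_average_le) (auto simp: mixture_def)
  have "\<bar>laplacian (\<lambda>y. ln (mixture y)) y\<bar>
      \<le> (\<Sum>i\<in>UNIV. \<bar>(\<Sum>k\<in>I. weight k y * ((score k y $ i)\<^sup>2 - A k $ i $ i)) / mixture y
                     - (partial_deriv (\<lambda>y. ln (mixture y)) i y)\<^sup>2\<bar>)"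
    unfolding laplacian_def second_partial_deriv_ln_mixture by (rule sum_abs)
  also have "\<dots> \<le> (\<Sum>i\<in>(UNIV :: 'n set). 2 * G\<^sup>2 + h)"
    using first second by (intro sum_mono) (smt (verit) zero_le_power2)
  finally show ?thesis
    by simp
qed

end

lemma gmm_log_density_derivative_bounds:
  fixes w :: "nat \<Rightarrow> real^'t \<Rightarrow> real" and m :: "nat \<Rightarrow> real^'t \<Rightarrow> real^'x"
    and S :: "nat \<Rightarrow> real^'t \<Rightarrow> real^'x^'x"
  assumes w_nonneg: "\<And>k. k \<in> {1..K} \<Longrightarrow> 0 \<le> w k \<theta>" and w_sum: "(\<Sum>k=1..K. w k \<theta>) = 1"
    and symm: "\<And>k. k \<in> {1..K} \<Longrightarrow> transpose (S k \<theta>) = S k \<theta>"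
    and eig: "\<And>k l. k \<in> {1..K} \<Longrightarrow> is_eigenvalue (S k \<theta>) l \<Longrightarrow> lmin \<le> l"
    and lmin: "0 < lmin"
    and mean: "\<And>k. k \<in> {1..K} \<Longrightarrow> norm (m k \<theta>) \<le> M"
  shows "norm (grad (\<lambda>y. ln (gmm_density K w m S \<theta> y)) x) \<le> (M + norm x) / lmin"
    and "\<bar>laplacian (\<lambda>y. ln (gmm_density K w m S \<theta> y)) x\<bar>
           \<le> real CARD('x) * (2 * ((M + norm x) / lmin)\<^sup>2 + 1 / lmin)"
proof -
  have pd: "lmin * (v \<bullet> v) \<le> v \<bullet> (S k \<theta> *v v)" if "k \<in> {1..K}" for k v
    using quadratic_form_ge_if_eigenvalues_ge[OF symm[OF that] eig[OF that]] .
  define c where "c k = w k \<theta> / sqrt ((2 * pi) ^ CARD('x) * det (S k \<theta>))" for k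
  have c_pos_iff: "0 < c k \<longleftrightarrow> 0 < w k \<theta>" and c_nonneg: "0 \<le> c k" if "k \<in> {1..K}" for k
    using pos_def_imp_det_pos[OF lmin pd[OF that]] w_nonneg[OF that]
    by (auto simp: c_def zero_less_divide_iff)
  obtain k0 where "k0 \<in> {1..K}" "0 < w k0 \<theta>"
    using w_sum w_nonneg by (metis less_eq_real_def sum.neutral zero_neq_one)
  then have "0 < c k0"
    using c_pos_iff by blast
  interpret gaussian_mixture "{1..K}" c "\<lambda>k. m k \<theta>" "\<lambda>k. matrix_inv (S k \<theta>)"
  proof
    show "\<exists>k\<in>{1..K}. 0 < c k"
      using \<open>k0 \<in> {1..K}\<close> \<open>0 < c k0\<close> by blast
    show "transpose (matrix_inv (S k \<theta>)) = matrix_inv (S k \<theta>)" if "k \<in> {1..K}" for k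
      using transpose_matrix_inv_symmetric pos_def_imp_invertible[OF lmin pd] symm that by blast
  qed (simp_all add: c_nonneg)
  have density: "gmm_density K w m S \<theta> = mixture"
    unfolding mixture_def weight_def exponent_def
    by (simp add: fun_eq_iff gmm_density_def gaussian_pdf_def c_def)
  have "norm (score k x) \<le> (M + norm x) / lmin" if "k \<in> {1..K}" for k
  proof -
    have "norm (score k x) \<le> norm (m k \<theta> - x) / lmin"
      unfolding score_def by (rule norm_matrix_inv_le[OF lmin pd[OF that]])
    also have "\<dots> \<le> (M + norm x) / lmin"
      using norm_triangle_ineq4[of "m k \<theta>" x] mean[OF that] lmin by (simp add: divide_right_mono)
    finally show ?thesis .
  qed
  moreover have "\<bar>matrix_inv (S k \<theta>) $ i $ i\<bar> \<le> 1 / lmin" if "k \<in> {1..K}" for k i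
    using abs_matrix_inv_diag_le[OF lmin pd[OF that]] .
  ultimately show "norm (grad (\<lambda>y. ln (gmm_density K w m S \<theta> y)) x) \<le> (M + norm x) / lmin"
    and "\<bar>laplacian (\<lambda>y. ln (gmm_density K w m S \<theta> y)) x\<bar>
           \<le> real CARD('x) * (2 * ((M + norm x) / lmin)\<^sup>2 + 1 / lmin)"
    unfolding density by (blast intro: norm_grad_ln_mixture_le abs_laplacian_ln_mixture_le)+
qed

section \<open>Polynomial growth\<close>

lemma le_one_plus_powr:
  fixes a p :: real
  assumes "0 \<le> a" and "1 \<le> p"
  shows "a \<le> 1 + a powr p"
proof (cases "a \<le> 1")
  case False
  then have "a powr 1 \<le> a powr p"
    using assms by (intro powr_mono) auto
  then show ?thesis
    using assms(1) by simp
qed (use powr_ge_zero[of a p] in linarith)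

lemma square_one_plus_powr_le:
  fixes t p :: real
  shows "(1 + t powr p)\<^sup>2 \<le> 2 * (1 + t powr (2 * p))"
proof -
  have "t powr (2 * p) = (t powr p)\<^sup>2"
    by (simp only: mult_2 powr_add power2_eq_square)
  then show ?thesis
    using zero_le_power2[of "t powr p - 1"] by (simp add: power2_eq_square algebra_simps)
qed

lemma affine_le_growth:
  fixes C R a p :: real
  assumes "0 \<le> C" and "1 \<le> R" and "0 \<le> a" and "1 \<le> p"
  shows "C * R + a \<le> (1 + C) * R * (1 + a powr p)"
proof -
  have "a \<le> R * (1 + a powr p)"
    using le_one_plus_powr[OF assms(3,4)] assms(2) powr_ge_zero[of a p]
    by (metis mult_1 mult_right_mono order_trans add_nonneg_nonneg zero_le_one)
  moreover have "C * R \<le> C * R * (1 + a powr p)"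
    using mult_left_mono[of 1 "1 + a powr p" "C * R"] assms(1,2) by simp
  ultimately show ?thesis
    by (simp add: algebra_simps)
qed

lemma square_growth_le:
  fixes G K h t a r p :: real
  assumes "0 \<le> G" and "G \<le> K * (1 + t powr r) * (1 + a powr p)" and "0 \<le> h"
  shows "2 * G\<^sup>2 + h \<le> (8 * K\<^sup>2 + h) * (1 + t powr (2 * r)) * (1 + a powr (2 * p))"
proof -
  have "G\<^sup>2 \<le> K\<^sup>2 * (1 + t powr r)\<^sup>2 * (1 + a powr p)\<^sup>2"
    using power_mono[OF assms(2,1), of 2] by (simp add: power_mult_distrib)
  also have "\<dots> \<le> K\<^sup>2 * (2 * (1 + t powr (2 * r))) * (2 * (1 + a powr (2 * p)))"
    by (intro mult_mono square_one_plus_powr_le) auto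
  also have "\<dots> = 4 * K\<^sup>2 * ((1 + t powr (2 * r)) * (1 + a powr (2 * p)))"
    by (simp add: algebra_simps)
  finally have "2 * G\<^sup>2 \<le> 8 * K\<^sup>2 * ((1 + t powr (2 * r)) * (1 + a powr (2 * p)))"
    by (simp add: ac_simps)
  moreover have "1 \<le> (1 + t powr (2 * r)) * (1 + a powr (2 * p))"
    using mult_mono[of 1 "1 + t powr (2 * r)" 1 "1 + a powr (2 * p)"] by simp
  then have "h \<le> h * ((1 + t powr (2 * r)) * (1 + a powr (2 * p)))"
    using mult_left_mono[of 1 _ h] assms(3) by simp
  ultimately show ?thesis
    by (simp add: algebra_simps)
qed

lemma gmm_log_density_growth_bounds:
  fixes w :: "nat \<Rightarrow> real^'t \<Rightarrow> real" and m :: "nat \<Rightarrow> real^'t \<Rightarrow> real^'x"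
    and S :: "nat \<Rightarrow> real^'t \<Rightarrow> real^'x^'x"
  assumes w_nonneg: "\<And>k. k \<in> {1..K} \<Longrightarrow> 0 \<le> w k \<theta>" and w_sum: "(\<Sum>k=1..K. w k \<theta>) = 1"
    and symm: "\<And>k. k \<in> {1..K} \<Longrightarrow> transpose (S k \<theta>) = S k \<theta>"
    and eig: "\<And>k l. k \<in> {1..K} \<Longrightarrow> is_eigenvalue (S k \<theta>) l \<Longrightarrow> lmin \<le> l"
    and lmin: "0 < lmin"
    and mean: "\<And>k. k \<in> {1..K} \<Longrightarrow> norm (m k \<theta>) \<le> C * (1 + norm \<theta> powr r)"
    and C: "0 \<le> C" and \<zeta>: "0 < \<zeta>" "\<zeta> \<le> 2"
  defines "K1 \<equiv> (1 + C) / lmin"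
  shows "norm (grad (\<lambda>y. ln (gmm_density K w m S \<theta> y)) x)
           \<le> K1 * (1 + norm \<theta> powr r) * (1 + norm x powr (2 / \<zeta>))"
    and "\<bar>laplacian (\<lambda>y. ln (gmm_density K w m S \<theta> y)) x\<bar>
           \<le> real CARD('x) * (8 * K1\<^sup>2 + 1 / lmin) * (1 + norm \<theta> powr (2 * r)) * (1 + norm x powr (4 / \<zeta>))"
proof -
  let ?G = "(C * (1 + norm \<theta> powr r) + norm x) / lmin"
  have grad_bound: "norm (grad (\<lambda>y. ln (gmm_density K w m S \<theta> y)) x) \<le> ?G"
    using w_nonneg w_sum symm eig lmin mean by (rule gmm_log_density_derivative_bounds(1))
  have "C * (1 + norm \<theta> powr r) + norm x \<le> (1 + C) * (1 + norm \<theta> powr r) * (1 + norm x powr (2 / \<zeta>))"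
    using C \<zeta> by (intro affine_le_growth) auto
  from divide_right_mono[OF this, of lmin]
  have G: "?G \<le> K1 * (1 + norm \<theta> powr r) * (1 + norm x powr (2 / \<zeta>))"
    using lmin by (simp add: K1_def)
  with grad_bound show "norm (grad (\<lambda>y. ln (gmm_density K w m S \<theta> y)) x)
           \<le> K1 * (1 + norm \<theta> powr r) * (1 + norm x powr (2 / \<zeta>))"
    by (rule order_trans)
  have "\<bar>laplacian (\<lambda>y. ln (gmm_density K w m S \<theta> y)) x\<bar>
      \<le> real CARD('x) * (2 * ?G\<^sup>2 + 1 / lmin)"
    using w_nonneg w_sum symm eig lmin mean by (rule gmm_log_density_derivative_bounds(2))
  also have "\<dots> \<le> real CARD('x) * ((8 * K1\<^sup>2 + 1 / lmin) * (1 + norm \<theta> powr (2 * r))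
                                        * (1 + norm x powr (2 * (2 / \<zeta>))))"
    using G C lmin by (intro mult_left_mono square_growth_le) auto
  finally show "\<bar>laplacian (\<lambda>y. ln (gmm_density K w m S \<theta> y)) x\<bar>
           \<le> real CARD('x) * (8 * K1\<^sup>2 + 1 / lmin) * (1 + norm \<theta> powr (2 * r)) * (1 + norm x powr (4 / \<zeta>))"
    by (simp add: mult.assoc)
qed

theorem proposition4p4:
  fixes K :: nat
    and w :: "nat \<Rightarrow> real^'t \<Rightarrow> real"
    and m :: "nat \<Rightarrow> real^'t \<Rightarrow> real^'x"
    and S :: "nat \<Rightarrow> real^'t \<Rightarrow> real^'x^'x"
    and \<Theta> :: "(real^'t) set"
    and \<zeta> :: real
  assumes w_nonneg: "\<And>k \<theta>. k \<in> {1..K} \<Longrightarrow> \<theta> \<in> \<Theta> \<Longrightarrow> w k \<theta> \<ge> 0"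
    and w_sum: "\<And>\<theta>. \<theta> \<in> \<Theta> \<Longrightarrow> (\<Sum>k=1..K. w k \<theta>) = 1"
    and cont_w: "\<And>k. k \<in> {1..K} \<Longrightarrow> continuous_on \<Theta> (w k)"
    and cont_m: "\<And>k. k \<in> {1..K} \<Longrightarrow> continuous_on \<Theta> (m k)"
    and cont_S: "\<And>k. k \<in> {1..K} \<Longrightarrow> continuous_on \<Theta> (S k)"
    and mean_growth: "\<exists>r C. r > 0 \<and> C \<ge> 0 \<and>
          (\<forall>\<theta>\<in>\<Theta>. \<forall>k\<in>{1..K}. norm (m k \<theta>) \<le> C * (1 + norm \<theta> powr r))"
    and cov_spec: "\<exists>lmin lmax. 0 < lmin \<and> lmin \<le> lmax \<and>
          (\<forall>\<theta>\<in>\<Theta>. \<forall>k\<in>{1..K}. transpose (S k \<theta>) = S k \<theta> \<and>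
             (\<forall>l. is_eigenvalue (S k \<theta>) l \<longrightarrow> lmin \<le> l \<and> l \<le> lmax))"
    and zeta: "0 < \<zeta>" "\<zeta> \<le> 2"
  shows "\<exists>K1 K2 k1 k2. 0 < K1 \<and> 0 < K2 \<and> k1 \<ge> 0 \<and> k2 \<ge> 0 \<and>
          (\<forall>x. \<forall>\<theta>\<in>\<Theta>.
             norm (grad (\<lambda>y. ln (gmm_density K w m S \<theta> y)) x)
               \<le> K1 * (1 + norm \<theta> powr k1) * (1 + norm x powr (2 / \<zeta>)) \<and>
             \<bar>laplacian (\<lambda>y. ln (gmm_density K w m S \<theta> y)) x\<bar>
               \<le> K2 * (1 + norm \<theta> powr k2) * (1 + norm x powr (4 / \<zeta>)))"
proof -
  obtain r C where "0 < r" "0 \<le> C"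
    and mean: "\<And>\<theta> k. \<theta> \<in> \<Theta> \<Longrightarrow> k \<in> {1..K} \<Longrightarrow> norm (m k \<theta>) \<le> C * (1 + norm \<theta> powr r)"
    using mean_growth by blast
  obtain lmin where "0 < lmin"
    and symm: "\<And>\<theta> k. \<theta> \<in> \<Theta> \<Longrightarrow> k \<in> {1..K} \<Longrightarrow> transpose (S k \<theta>) = S k \<theta>"
    and eig: "\<And>\<theta> k l. \<theta> \<in> \<Theta> \<Longrightarrow> k \<in> {1..K} \<Longrightarrow> is_eigenvalue (S k \<theta>) l \<Longrightarrow> lmin \<le> l"
    using cov_spec by blast
  let ?K1 = "(1 + C) / lmin"
  let ?K2 = "real CARD('x) * (8 * ?K1\<^sup>2 + 1 / lmin)"
  have grad_bound: "norm (grad (\<lambda>y. ln (gmm_density K w m S \<theta> y)) x)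
      \<le> ?K1 * (1 + norm \<theta> powr r) * (1 + norm x powr (2 / \<zeta>))" if "\<theta> \<in> \<Theta>" for \<theta> x
    using w_nonneg[OF _ that] w_sum[OF that] symm[OF that] eig[OF that] \<open>0 < lmin\<close> mean[OF that]
      \<open>0 \<le> C\<close> zeta
    by (rule gmm_log_density_growth_bounds(1))
  have laplacian_bound: "\<bar>laplacian (\<lambda>y. ln (gmm_density K w m S \<theta> y)) x\<bar>
      \<le> ?K2 * (1 + norm \<theta> powr (2 * r)) * (1 + norm x powr (4 / \<zeta>))" if "\<theta> \<in> \<Theta>" for \<theta> x
    using w_nonneg[OF _ that] w_sum[OF that] symm[OF that] eig[OF that] \<open>0 < lmin\<close> mean[OF that]
      \<open>0 \<le> C\<close> zeta
    by (rule gmm_log_density_growth_bounds(2))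
  have "0 < ?K1" "0 < ?K2"
    using \<open>0 \<le> C\<close> \<open>0 < lmin\<close> by (simp_all add: add_nonneg_pos)
  show ?thesis
    by (rule exI[of _ ?K1], rule exI[of _ ?K2], rule exI[of _ r], rule exI[of _ "2 * r"])
      (use \<open>0 < r\<close> \<open>0 < ?K1\<close> \<open>0 < ?K2\<close> grad_bound laplacian_bound in auto)
qed

end
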